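(* Let $0\le\delta<1$, $\beta\in(0,1-\delta)$, and $w_1,\dots,w_\ell\in\mathbb{R}^n$ with $\ell=\delta n$. Consider the semidefinite program: minimize $\sum_{i=1}^n q_i$ over $\eta\in\mathbb{R}^\ell$, $q\in\mathbb{R}^n$ with $q\ge0$, and $n\times n$ positive semidefinite $G$, subject to \[ \sum_{k=1}^\ell\eta_k w_kw_k^T+G-\frac1\beta\mathrm{diag}(G)+\sum_{i=1}^n q_ie_ie_i^T\succeq I. \] Then every feasible solution has objective value at least $(1-\delta-\beta)n$; in particular its optimum value is at least $(1-\delta-\beta)n$.
   Context: $e_i$ is the $i$-th standard basis vector, $I$ the identity, $\mathrm{diag}(G)$ the diagonal part of $G$, and $\succeq$ the positive semidefinite order. *)

theory Defs
  imports "HOL-Analysis.Analysis"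
begin

definition psd :: "real^'n^'n \<Rightarrow> bool" where
  "psd M \<longleftrightarrow> transpose M = M \<and> (\<forall>x. 0 \<le> x \<bullet> (M *v x))"

definition loewner_ge :: "real^'n^'n \<Rightarrow> real^'n^'n \<Rightarrow> bool" where
  "loewner_ge A B \<longleftrightarrow> psd (A - B)"

definition outer :: "real^'n \<Rightarrow> real^'n^'n" where
  "outer w = (\<chi> i j. w $ i * w $ j)"

definition diag_part :: "real^'n^'n \<Rightarrow> real^'n^'n" where
  "diag_part G = (\<chi> i j. if i = j then G $ i $ j else 0)"

definition e_vec :: "'n::finite \<Rightarrow> real^'n" where
  "e_vec i = (\<chi> j. if j = i then 1 else 0)"

end

theory Submission
  imports Defs
begin

text \<open>Write \<open>M = G - \<beta>\<^sup>-\<^sup>1 diag(G)\<close> and \<open>Q = diag(q)\<close>. Let \<open>W\<close> be a subspace of maximal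
  dimension on which \<open>M\<close> is positive definite. Rescaling by \<open>diag(G)^(-1/2)\<close> maps \<open>W\<close>
  injectively onto a subspace on which the correlation matrix of \<open>G\<close> dominates \<open>\<beta>\<^sup>-\<^sup>1 I\<close>;
  that matrix is PSD with trace at most \<open>n\<close>, so \<open>dim W \<le> \<beta> n\<close>. By maximality \<open>M\<close> is
  negative semidefinite on the orthogonal complement \<open>U\<close> of the \<open>w\<^sub>k\<close> and of \<open>M W\<close>, where
  the constraint therefore reads \<open>u\<^sup>T Q u \<ge> |u|\<^sup>2\<close>. Hence
  \<open>\<Sum> q\<^sub>i = tr Q \<ge> dim U \<ge> n - \<ell> - \<beta> n = (1 - \<delta> - \<beta>) n\<close>.\<close>

definition quad_form :: "real^'n^'n \<Rightarrow> real^'n \<Rightarrow> real" where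
  "quad_form A x = x \<bullet> (A *v x)"

lemma quad_form_expand: "quad_form A x = (\<Sum>i\<in>UNIV. \<Sum>j\<in>UNIV. A$i$j * x$i * x$j)"
  unfolding quad_form_def inner_vec_def matrix_vector_mult_def
  by (simp add: sum_distrib_left mult_ac)

lemma quad_form_add: "quad_form (A + B) x = quad_form A x + quad_form B x"
  by (simp add: quad_form_def matrix_vector_mult_add_rdistrib inner_add_right)

lemma quad_form_diff: "quad_form (A - B) x = quad_form A x - quad_form B x"
  by (simp add: quad_form_def matrix_vector_mult_diff_rdistrib inner_diff_right)

lemma quad_form_scaleR: "quad_form (c *\<^sub>R A) x = c * quad_form A x"
  by (simp add: quad_form_expand sum_distrib_left mult_ac)

lemma quad_form_sum: "finite S \<Longrightarrow> quad_form (\<Sum>k\<in>S. A k) x = (\<Sum>k\<in>S. quad_form (A k) x)"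
  by (induction S rule: finite_induct) (simp_all add: quad_form_add, simp add: quad_form_def)

lemma quad_form_mat_1 [simp]: "quad_form (mat 1) x = x \<bullet> x"
  by (simp add: quad_form_def)

lemma quad_form_outer: "quad_form (outer w) x = (w \<bullet> x)\<^sup>2"
  by (simp add: quad_form_expand outer_def inner_vec_def power2_eq_square
      sum_distrib_left sum_distrib_right mult_ac)

lemma quad_form_diag_part: "quad_form (diag_part G) x = (\<Sum>i\<in>UNIV. G$i$i * (x$i)\<^sup>2)"
proof -
  have "quad_form (diag_part G) x = (\<Sum>i\<in>UNIV. \<Sum>j\<in>UNIV. if j = i then G$i$i * x$i * x$i else 0)"
    unfolding quad_form_expand diag_part_def by (intro sum.cong refl) auto
  then show ?thesis by (simp add: power2_eq_square mult_ac)
qed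

lemma quad_form_add_vectors:
  "quad_form A (x + y) = quad_form A x + x \<bullet> (A *v y) + y \<bullet> (A *v x) + quad_form A y"
  by (simp add: quad_form_def matrix_vector_right_distrib inner_add_left inner_add_right)

lemma quad_form_scaleR_vector: "quad_form A (c *\<^sub>R x) = c\<^sup>2 * quad_form A x"
  by (simp add: quad_form_def matrix_vector_mult_scaleR power2_eq_square)

lemma e_vec_eq_axis: "e_vec i = axis i 1"
  by (simp add: e_vec_def axis_def)

lemma inner_axis_matrix_vector_axis: "axis i 1 \<bullet> (A *v axis j 1) = A$i$j"
  by (simp add: inner_axis' matrix_vector_mult_basis column_def)

lemma quad_form_axis: "quad_form A (axis i 1) = A$i$i"
  by (simp add: quad_form_def inner_axis_matrix_vector_axis)

lemma psd_iff_quad_form: "psd A \<longleftrightarrow> transpose A = A \<and> (\<forall>x. 0 \<le> quad_form A x)"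
  by (simp add: psd_def quad_form_def)

lemma loewner_ge_mat_1_imp_quad_form_ge: "loewner_ge A (mat 1) \<Longrightarrow> x \<bullet> x \<le> quad_form A x"
  by (auto simp: loewner_ge_def psd_iff_quad_form quad_form_diff)

lemma quad_form_diagonal:
  "quad_form (\<Sum>i\<in>UNIV. q$i *\<^sub>R outer (e_vec i)) x = (\<Sum>i\<in>UNIV. q$i * (x$i)\<^sup>2)"
  by (simp add: quad_form_sum quad_form_scaleR quad_form_outer e_vec_eq_axis inner_axis')

lemma trace_diagonal: "trace (\<Sum>i\<in>UNIV. q$i *\<^sub>R outer (e_vec i)) = (\<Sum>i\<in>UNIV. q$i)"
proof -
  have "(\<Sum>i\<in>UNIV. q$i *\<^sub>R outer (e_vec i)) $ j $ j = q$j" for j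
  proof -
    have "q$i * (axis j 1 $ i)\<^sup>2 = (if i = j then q$j else 0)" for i
      by (simp add: axis_def)
    then show ?thesis
      using quad_form_diagonal[of q "axis j 1"] by (simp add: quad_form_axis)
  qed
  then show ?thesis by (simp add: trace_def)
qed

lemma psd_diag_nonneg: "psd G \<Longrightarrow> 0 \<le> G$i$i"
  by (metis psd_iff_quad_form quad_form_axis)

lemma psd_symmetric:
  assumes "psd G"
  shows "G$j$i = G$i$j"
proof -
  from assms have "transpose G $ i $ j = G $ i $ j" by (simp add: psd_def)
  then show ?thesis by (simp add: transpose_def)
qed

lemma psd_zero_diag_imp_zero:
  assumes "psd G" and zero: "G$a$a = 0"
  shows "G$a$c = 0"
proof (cases "a = c")
  case True
  with zero show ?thesis by simp
next
  case False
  have affine: "0 \<le> 2 * t * G$a$c + G$c$c" for t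
  proof -
    have "quad_form G (t *\<^sub>R axis a 1 + axis c 1) = 2 * t * G$a$c + G$c$c"
      by (simp add: quad_form_add_vectors quad_form_scaleR_vector quad_form_axis
          matrix_vector_mult_scaleR inner_axis_matrix_vector_axis zero psd_symmetric[OF \<open>psd G\<close>])
    with \<open>psd G\<close> show ?thesis by (metis psd_iff_quad_form)
  qed
  show ?thesis
  proof (rule ccontr)
    assume "G$a$c \<noteq> 0"
    then have "2 * (- (G$c$c + 1) / (2 * G$a$c)) * G$a$c + G$c$c = -1"
      by (simp add: field_simps)
    with affine[of "- (G$c$c + 1) / (2 * G$a$c)"] show False by linarith
  qed
qed

text \<open>Where \<open>G$i$i = 0\<close> the division by zero makes the \<open>i\<close>-th row and column of
  the correlation matrix vanish; for PSD \<open>G\<close> that row and column of \<open>G\<close> vanish too.\<close>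

definition correlation :: "real^'n^'n \<Rightarrow> real^'n^'n" where
  "correlation G = (\<chi> i j. G$i$j / (sqrt (G$i$i) * sqrt (G$j$j)))"

definition sqrt_diag :: "real^'n^'n \<Rightarrow> real^'n^'n" where
  "sqrt_diag G = (\<chi> i j. if i = j then sqrt (G$i$i) else 0)"

lemma sqrt_diag_mult: "(sqrt_diag G *v x) $ i = sqrt (G$i$i) * x$i"
proof -
  have "(sqrt_diag G *v x) $ i = (\<Sum>j\<in>UNIV. if j = i then sqrt (G$i$i) * x$i else 0)"
    unfolding sqrt_diag_def matrix_vector_mult_def
    by (simp only: vec_lambda_beta) (intro sum.cong refl, simp)
  then show ?thesis by simp
qed

lemma quad_form_correlation_eq:
  "quad_form (correlation G) z = quad_form G (\<chi> i. z$i / sqrt (G$i$i))"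
  unfolding quad_form_expand correlation_def by (simp add: divide_inverse mult_ac)

lemma correlation_quad_form_nonneg: "psd G \<Longrightarrow> 0 \<le> quad_form (correlation G) z"
  by (simp add: quad_form_correlation_eq psd_iff_quad_form)

lemma trace_correlation_le:
  fixes G :: "real^'n^'n"
  shows "trace (correlation G) \<le> CARD('n)"
proof -
  have "correlation G $ i $ i \<le> 1" for i
    by (auto simp: correlation_def divide_le_eq_1)
  then have "trace (correlation G) \<le> (\<Sum>i\<in>(UNIV::'n set). 1)"
    unfolding trace_def by (intro sum_mono)
  then show ?thesis by simp
qed

lemma quad_form_eq_correlation:
  assumes "psd G"
  shows "quad_form G x = quad_form (correlation G) (sqrt_diag G *v x)"
proof -
  have "G$i$j * x$i * x$j = correlation G $ i $ j * (sqrt_diag G *v x)$i * (sqrt_diag G *v x)$j"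
    for i j
  proof (cases "G$i$i = 0 \<or> G$j$j = 0")
    case True
    then have "G$i$j = 0"
      using psd_zero_diag_imp_zero[OF assms] psd_symmetric[OF assms] by metis
    with True show ?thesis by (auto simp: correlation_def)
  next
    case False
    with psd_diag_nonneg[OF assms] have "sqrt (G$i$i) \<noteq> 0" "sqrt (G$j$j) \<noteq> 0"
      by auto
    then show ?thesis
      unfolding correlation_def sqrt_diag_mult vec_lambda_beta by (simp add: field_simps)
  qed
  then show ?thesis unfolding quad_form_expand by (simp only:)
qed

lemma quad_form_diag_part_eq_sqrt_diag:
  "psd G \<Longrightarrow> quad_form (diag_part G) x = (sqrt_diag G *v x) \<bullet> (sqrt_diag G *v x)"
  unfolding quad_form_diag_part inner_vec_def sqrt_diag_mult
  by (simp add: power2_eq_square[symmetric] power_mult_distrib psd_diag_nonneg)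

lemma orthogonal_to_span_iff:
  "(\<forall>x\<in>span A. orthogonal x y) \<longleftrightarrow> (\<forall>x\<in>A. orthogonal x y)"
  using orthogonal_to_span span_base orthogonal_commute by metis

lemma dim_orthogonal_complement:
  fixes A :: "'a::euclidean_space set"
  shows "dim {y. \<forall>a\<in>A. orthogonal a y} + dim A = DIM('a)"
proof -
  have "{y. \<forall>a\<in>A. orthogonal a y} = {y \<in> UNIV. \<forall>x\<in>span A. orthogonal x y}"
    by (simp add: orthogonal_to_span_iff)
  then show ?thesis
    using dim_subspace_orthogonal_to_vectors[OF subspace_span subspace_UNIV, of A]
    by (simp add: dim_UNIV)
qed

lemma orthonormal_extend_to_basis:
  fixes B0 :: "'a::euclidean_space set"
  assumes orth0: "pairwise orthogonal B0" and norm0: "\<And>b. b \<in> B0 \<Longrightarrow> norm b = 1"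
  obtains B where "B0 \<subseteq> B" "pairwise orthogonal B" "\<And>b. b \<in> B \<Longrightarrow> norm b = 1"
    "span B = UNIV"
proof -
  obtain B1 where B1: "B1 \<subseteq> {y. \<forall>a\<in>B0. orthogonal a y}" "pairwise orthogonal B1"
      "\<And>b. b \<in> B1 \<Longrightarrow> norm b = 1" "independent B1"
      "card B1 = dim {y. \<forall>a\<in>B0. orthogonal a y}" "span B1 = {y. \<forall>a\<in>B0. orthogonal a y}"
    using orthonormal_basis_subspace[OF subspace_orthogonal_to_vectors[of B0]] by blast
  define B where "B = B0 \<union> B1"
  have cross: "orthogonal a b" if "a \<in> B0" "b \<in> B1" for a b
    using that B1(1) by blast
  have orth: "pairwise orthogonal B"
    using orth0 B1(2) cross orthogonal_commute unfolding B_def pairwise_def by blast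
  have norm: "norm b = 1" if "b \<in> B" for b
    using that norm0 B1(3) unfolding B_def by blast
  then have indep: "independent B"
    using orth pairwise_orthogonal_independent by force
  have disjoint: "B0 \<inter> B1 = {}"
    using cross norm0 by (metis disjoint_iff norm_zero orthogonal_self zero_neq_one)
  have "finite B0" "finite B1"
    using orth0 B1(2) by (auto intro: pairwise_orthogonal_imp_finite)
  moreover have "card B0 = dim B0"
    using independent_mono[OF indep, of B0] dim_span_eq_card_independent dim_span
    by (metis B_def sup_ge1)
  ultimately have "card B = DIM('a)"
    using disjoint dim_orthogonal_complement[of B0] B1(5)
    by (simp add: B_def card_Un_disjoint)
  then have "UNIV \<subseteq> span B"
    using card_eq_dim[of B UNIV] indep pairwise_orthogonal_imp_finite[OF orth]
    by (simp add: dim_UNIV)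
  then show ?thesis
    using that[of B] orth norm by (auto simp: B_def)
qed

lemma sum_inner_orthonormal_basis:
  fixes B :: "'a::euclidean_space set"
  assumes orth: "pairwise orthogonal B" and norm: "\<And>b. b \<in> B \<Longrightarrow> norm b = 1"
    and span: "span B = UNIV"
  shows "(\<Sum>b\<in>B. (x \<bullet> b) * (y \<bullet> b)) = x \<bullet> y"
proof -
  have "finite B" using orth by (rule pairwise_orthogonal_imp_finite)
  then have "(\<Sum>b\<in>B. (y \<bullet> b) *\<^sub>R b) = y"
    using orthonormal_basis_expand[OF orth norm] span by simp
  then have "x \<bullet> y = x \<bullet> (\<Sum>b\<in>B. (y \<bullet> b) *\<^sub>R b)" by simp
  then show ?thesis by (simp add: inner_sum_right mult.commute)
qed

lemma sum_orthonormal_basis_coords: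
  fixes B :: "(real^'n) set"
  assumes "pairwise orthogonal B" "\<And>b. b \<in> B \<Longrightarrow> norm b = 1" "span B = UNIV"
  shows "(\<Sum>b\<in>B. b$i * b$j) = (if i = j then 1 else 0)"
  using sum_inner_orthonormal_basis[OF assms, of "axis i 1" "axis j 1"]
  by (simp add: inner_axis' inner_axis_axis) (simp add: axis_def)

lemma sum_quad_form_orthonormal_le_trace:
  fixes C :: "real^'n^'n"
  assumes orth0: "pairwise orthogonal B0" and norm0: "\<And>b. b \<in> B0 \<Longrightarrow> norm b = 1"
    and nonneg: "\<And>z. 0 \<le> quad_form C z"
  shows "(\<Sum>b\<in>B0. quad_form C b) \<le> trace C"
proof -
  obtain B where B: "B0 \<subseteq> B" "pairwise orthogonal B" "\<And>b. b \<in> B \<Longrightarrow> norm b = 1"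
    "span B = UNIV"
    using orthonormal_extend_to_basis[OF orth0 norm0] by blast
  have "finite B" using B(2) by (rule pairwise_orthogonal_imp_finite)
  then have "(\<Sum>b\<in>B0. quad_form C b) \<le> (\<Sum>b\<in>B. quad_form C b)"
    using B(1) nonneg by (intro sum_mono2) auto
  also have "\<dots> = (\<Sum>i\<in>UNIV. \<Sum>j\<in>UNIV. \<Sum>b\<in>B. C$i$j * (b$i * b$j))"
    unfolding quad_form_expand mult.assoc by (subst sum.swap) (simp only: sum.swap[of _ B])
  also have "\<dots> = (\<Sum>i\<in>UNIV. \<Sum>j\<in>UNIV. C$i$j * (if i = j then 1 else 0))"
    by (simp only: sum_distrib_left[symmetric] sum_orthonormal_basis_coords[OF B(2-4)])
  also have "\<dots> = trace C"
    by (simp add: trace_def if_distrib cong: if_cong)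
  finally show ?thesis .
qed

lemma dim_le_trace_if_quad_form_ge:
  fixes C :: "real^'n^'n"
  assumes nonneg: "\<And>z. 0 \<le> quad_form C z" and "subspace U"
    and ge: "\<And>u. u \<in> U \<Longrightarrow> c * (u \<bullet> u) \<le> quad_form C u"
  shows "c * dim U \<le> trace C"
proof -
  obtain B where B: "B \<subseteq> U" "pairwise orthogonal B" "\<And>b. b \<in> B \<Longrightarrow> norm b = 1"
    "card B = dim U"
    using orthonormal_basis_subspace[OF \<open>subspace U\<close>] by metis
  have "c * dim U = (\<Sum>b\<in>B. c * (b \<bullet> b))"
    using B(3,4) by (simp add: norm_eq_1)
  also have "\<dots> \<le> (\<Sum>b\<in>B. quad_form C b)"
    using B(1) ge by (intro sum_mono) auto
  also have "\<dots> \<le> trace C"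
    using sum_quad_form_orthonormal_le_trace[OF B(2,3) nonneg] .
  finally show ?thesis .
qed

lemma inner_matrix_vector_symmetric:
  "transpose A = A \<Longrightarrow> x \<bullet> (A *v y) = (A *v x) \<bullet> (y::real^'n)"
  by (metis dot_lmul_matrix transpose_matrix_vector)

lemma positive_subspace_insert:
  fixes A :: "real^'n^'n"
  assumes sym: "transpose A = A" and "subspace W"
    and pos: "\<And>x. x \<in> W \<Longrightarrow> x \<noteq> 0 \<Longrightarrow> 0 < quad_form A x"
    and orth: "\<And>y. y \<in> W \<Longrightarrow> z \<bullet> (A *v y) = 0" and z: "0 < quad_form A z"
    and x: "x \<in> span (insert z W)" "x \<noteq> 0"
  shows "0 < quad_form A x"
proof -
  obtain k where "x - k *\<^sub>R z \<in> span W"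
    using x(1) span_insert by blast
  then have y: "x - k *\<^sub>R z \<in> W"
    using \<open>subspace W\<close> span_eq_iff by blast
  have "(x - k *\<^sub>R z) \<bullet> (A *v (k *\<^sub>R z)) = 0" "(k *\<^sub>R z) \<bullet> (A *v (x - k *\<^sub>R z)) = 0"
    using orth[OF y] inner_matrix_vector_symmetric[OF sym, of "x - k *\<^sub>R z" "k *\<^sub>R z"]
    by (simp_all add: matrix_vector_mult_scaleR inner_commute)
  then have split: "quad_form A x = quad_form A (x - k *\<^sub>R z) + k\<^sup>2 * quad_form A z"
    using quad_form_add_vectors[of A "x - k *\<^sub>R z" "k *\<^sub>R z"]
    by (simp add: quad_form_scaleR_vector)
  show ?thesis
  proof (cases "x - k *\<^sub>R z = 0")
    case True
    with x(2) have "k \<noteq> 0" by auto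
    with True split z show ?thesis by (simp add: quad_form_def)
  next
    case False
    with pos[OF y] split z show ?thesis by (simp add: add_pos_nonneg)
  qed
qed

text \<open>This replaces the spectral theorem: a vector \<open>z\<close> with \<open>z\<^sup>T A z > 0\<close> that is
  \<open>A\<close>-orthogonal to \<open>W\<close> would enlarge \<open>W\<close> to a bigger positive definite subspace.\<close>

lemma maximal_positive_subspace:
  fixes A :: "real^'n^'n"
  assumes sym: "transpose A = A"
  obtains W where "subspace W" "\<And>x. x \<in> W \<Longrightarrow> x \<noteq> 0 \<Longrightarrow> 0 < quad_form A x"
    "\<And>z. (\<And>y. y \<in> W \<Longrightarrow> z \<bullet> (A *v y) = 0) \<Longrightarrow> quad_form A z \<le> 0"
proof -
  define positive where
    "positive W \<longleftrightarrow> subspace W \<and> (\<forall>x\<in>W. x \<noteq> 0 \<longrightarrow> 0 < quad_form A x)" for W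
  have "positive {0}"
    by (simp add: positive_def subspace_0)
  moreover have "\<forall>V. positive V \<longrightarrow> dim V < CARD('n) + 1"
    by (simp add: less_Suc_eq_le dim_subset_UNIV_cart)
  ultimately obtain W where W: "positive W" and max: "\<And>V. positive V \<Longrightarrow> dim V \<le> dim W"
    using ex_has_greatest_nat[of positive "{0}" dim] by blast
  have sub: "subspace W" and pos: "\<And>x. x \<in> W \<Longrightarrow> x \<noteq> 0 \<Longrightarrow> 0 < quad_form A x"
    using W by (auto simp: positive_def)
  show ?thesis
  proof (rule that[OF sub pos])
    fix z assume orth: "\<And>y. y \<in> W \<Longrightarrow> z \<bullet> (A *v y) = 0"
    show "quad_form A z \<le> 0"
    proof (rule ccontr)
      assume "\<not> quad_form A z \<le> 0"
      then have z: "0 < quad_form A z" by simp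
      then have "z \<notin> W"
        using orth[of z] by (auto simp: quad_form_def)
      then have "z \<notin> span W"
        using sub span_eq_iff by blast
      then have "dim (span (insert z W)) = dim W + 1"
        by (simp add: dim_insert)
      moreover have "positive (span (insert z W))"
        using positive_subspace_insert[OF sym sub pos orth z] by (simp add: positive_def)
      ultimately show False
        using max by fastforce
    qed
  qed
qed

lemma dim_le_if_quad_form_gt_diag_part:
  fixes G :: "real^'n^'n"
  assumes "psd G" and "subspace W"
    and gt: "\<And>x. x \<in> W \<Longrightarrow> x \<noteq> 0 \<Longrightarrow> c * quad_form (diag_part G) x < quad_form G x"
  shows "c * dim W \<le> CARD('n)"
proof -
  let ?D = "(*v) (sqrt_diag G)"
  have scaled: "quad_form G x = quad_form (correlation G) (?D x)"
    "quad_form (diag_part G) x = ?D x \<bullet> ?D x" for x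
    using quad_form_eq_correlation quad_form_diag_part_eq_sqrt_diag \<open>psd G\<close> by blast+
  have "inj_on ?D W"
    unfolding linear_inj_on_iff_eq_0[OF matrix_vector_mul_linear \<open>subspace W\<close>]
  proof (intro ballI impI)
    fix x assume "x \<in> W" "?D x = 0"
    with gt[of x] scaled[of x] show "x = 0" by (auto simp: quad_form_def)
  qed
  then have "dim (?D ` W) = dim W"
    using dim_image_eq[OF matrix_vector_mul_linear] \<open>subspace W\<close> span_eq_iff by metis
  moreover have "c * dim (?D ` W) \<le> trace (correlation G)"
  proof (rule dim_le_trace_if_quad_form_ge)
    show "subspace (?D ` W)"
      using linear_subspace_image[OF matrix_vector_mul_linear \<open>subspace W\<close>] .
    show "0 \<le> quad_form (correlation G) z" for z
      using correlation_quad_form_nonneg[OF \<open>psd G\<close>] .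
    show "c * (u \<bullet> u) \<le> quad_form (correlation G) u" if u: "u \<in> ?D ` W" for u
    proof -
      obtain x where "x \<in> W" "u = ?D x" using u by blast
      then show ?thesis
        using gt[of x] scaled[of x] by (cases "x = 0") (auto simp: quad_form_def)
    qed
  qed
  ultimately show ?thesis
    using trace_correlation_le[of G] by simp
qed

lemma dim_Un_le:
  fixes A B :: "'a::euclidean_space set"
  shows "dim (A \<union> B) \<le> dim A + dim B"
proof -
  obtain BA where BA: "independent BA" "A \<subseteq> span BA" "card BA = dim A"
    using basis_exists[of A] by metis
  obtain BB where BB: "independent BB" "B \<subseteq> span BB" "card BB = dim B"
    using basis_exists[of B] by metis
  have "finite (BA \<union> BB)"
    using BA(1) BB(1) independent_imp_finite by blast
  moreover have "A \<union> B \<subseteq> span (BA \<union> BB)"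
    using BA(2) BB(2) span_mono[of BA "BA \<union> BB"] span_mono[of BB "BA \<union> BB"] by blast
  ultimately have "dim (A \<union> B) \<le> card (BA \<union> BB)"
    by (rule dim_le_card[rotated])
  also have "\<dots> \<le> dim A + dim B"
    using card_Un_le[of BA BB] BA(3) BB(3) by simp
  finally show ?thesis .
qed

text \<open>The \<open>A\<close>-orthogonal complement of \<open>W\<close> is the ordinary orthogonal complement of
  \<open>A W\<close>, so \<open>U\<close> is the orthogonal complement of \<open>F \<union> A W\<close>.\<close>

lemma large_nonpositive_subspace:
  fixes A :: "real^'n^'n" and F :: "(real^'n) set"
  assumes "transpose A = A"
  obtains W U where "subspace W" "\<And>x. x \<in> W \<Longrightarrow> x \<noteq> 0 \<Longrightarrow> 0 < quad_form A x"
    "subspace U" "\<And>u a. u \<in> U \<Longrightarrow> a \<in> F \<Longrightarrow> a \<bullet> u = 0"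
    "\<And>u. u \<in> U \<Longrightarrow> quad_form A u \<le> 0" "CARD('n) \<le> dim U + dim W + dim F"
proof -
  obtain W where W: "subspace W" "\<And>x. x \<in> W \<Longrightarrow> x \<noteq> 0 \<Longrightarrow> 0 < quad_form A x"
    "\<And>z. (\<And>y. y \<in> W \<Longrightarrow> z \<bullet> (A *v y) = 0) \<Longrightarrow> quad_form A z \<le> 0"
    using maximal_positive_subspace[OF assms] by blast
  define U where "U = {u. \<forall>a \<in> F \<union> (*v) A ` W. orthogonal a u}"
  have "subspace U"
    unfolding U_def by (rule subspace_orthogonal_to_vectors)
  moreover have "a \<bullet> u = 0" if "u \<in> U" "a \<in> F" for u a
    using that by (auto simp: U_def orthogonal_def)
  moreover have "quad_form A u \<le> 0" if "u \<in> U" for u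
  proof (rule W(3))
    fix y assume "y \<in> W"
    with \<open>u \<in> U\<close> have "(A *v y) \<bullet> u = 0" by (auto simp: U_def orthogonal_def)
    then show "u \<bullet> (A *v y) = 0" by (simp add: inner_commute)
  qed
  moreover have "CARD('n) \<le> dim U + dim W + dim F"
  proof -
    have "dim ((*v) A ` W) \<le> dim W"
      by (rule dim_image_le[OF matrix_vector_mul_linear])
    then have "dim (F \<union> (*v) A ` W) \<le> dim F + dim W"
      using dim_Un_le[of F "(*v) A ` W"] by linarith
    then show ?thesis
      using dim_orthogonal_complement[of "F \<union> (*v) A ` W"] by (simp add: U_def)
  qed
  ultimately show ?thesis
    using that W(1,2) by blast
qed

theorem theorem14:
  fixes \<delta> \<beta> :: real and l :: nat
    and w :: "nat \<Rightarrow> real^'n"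
    and \<eta> :: "nat \<Rightarrow> real" and q :: "real^'n" and G :: "real^'n^'n"
  assumes "0 \<le> \<delta>" and "\<delta> < 1"
    and "0 < \<beta>" and "\<beta> < 1 - \<delta>"
    and "real l = \<delta> * real CARD('n)"
    and "\<forall>i. 0 \<le> q $ i"
    and "psd G"
    and "loewner_ge
           ((\<Sum>k<l. \<eta> k *\<^sub>R outer (w k)) + G - (1 / \<beta>) *\<^sub>R diag_part G
            + (\<Sum>i\<in>UNIV. q $ i *\<^sub>R outer (e_vec i)))
           (mat 1)"
  shows "(\<Sum>i\<in>UNIV. q $ i) \<ge> (1 - \<delta> - \<beta>) * real CARD('n)"
proof -
  define M where "M = G - (1 / \<beta>) *\<^sub>R diag_part G"
  define Q where "Q = (\<Sum>i\<in>UNIV. q $ i *\<^sub>R outer (e_vec i))"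
  have feasible: "x \<bullet> x \<le> (\<Sum>k<l. \<eta> k * (w k \<bullet> x)\<^sup>2) + quad_form M x + quad_form Q x" for x
    using loewner_ge_mat_1_imp_quad_form_ge[OF assms(8), of x]
    by (simp add: M_def Q_def quad_form_add quad_form_diff quad_form_sum quad_form_scaleR
        quad_form_outer)
  have "transpose M = M"
    using psd_symmetric[OF assms(7)]
    by (simp add: M_def vec_eq_iff transpose_def diag_part_def)
  then obtain W U where W: "subspace W" "\<And>x. x \<in> W \<Longrightarrow> x \<noteq> 0 \<Longrightarrow> 0 < quad_form M x"
    and U: "subspace U" "\<And>u a. u \<in> U \<Longrightarrow> a \<in> w ` {..<l} \<Longrightarrow> a \<bullet> u = 0"
      "\<And>u. u \<in> U \<Longrightarrow> quad_form M u \<le> 0"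
    and dims: "CARD('n) \<le> dim U + dim W + dim (w ` {..<l})"
    using large_nonpositive_subspace[where F = "w ` {..<l}"] by blast
  have "1 / \<beta> * dim W \<le> CARD('n)"
  proof (rule dim_le_if_quad_form_gt_diag_part[OF assms(7) W(1)])
    show "1 / \<beta> * quad_form (diag_part G) x < quad_form G x" if "x \<in> W" "x \<noteq> 0" for x
      using W(2)[OF that] by (simp add: M_def quad_form_diff quad_form_scaleR)
  qed
  then have "dim W \<le> \<beta> * CARD('n)"
    using assms(3) by (simp add: field_simps)
  moreover have "dim (w ` {..<l}) \<le> l"
    using dim_le_card'[of "w ` {..<l}"] card_image_le[of "{..<l}" w] by simp
  moreover have "(1::real) * dim U \<le> trace Q"
  proof (rule dim_le_trace_if_quad_form_ge[OF _ U(1)])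
    show "0 \<le> quad_form Q z" for z
      using assms(6) by (simp add: Q_def quad_form_diagonal sum_nonneg)
    show "1 * (u \<bullet> u) \<le> quad_form Q u" if "u \<in> U" for u
      using feasible[of u] U(2,3)[OF that] by simp
  qed
  ultimately show ?thesis
    using dims assms(5) by (simp add: Q_def trace_diagonal algebra_simps)
qed

end
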